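(* Let $\lambda \geq 2$ be an integer. Then there exists a positive integer $p''(\lambda)$ such that, with $p = p''(\lambda)$, each of the following three graphs has smallest adjacency eigenvalue less than $-\lambda$: (i) the graph consisting of $\lambda+1$ pairwise disjoint and mutually non-adjacent cliques $K_p$ together with one extra vertex adjacent to all vertices of these cliques; (ii) the graph consisting of two adjacent vertices $s$ and $s'$ and $\lambda+1$ pairwise disjoint, mutually non-adjacent cliques $Q_1,\dots,Q_{\lambda+1}$, each a $K_p$, where $s$ is adjacent to all vertices of $Q_1,\dots,Q_\lambda$ and to none of $Q_{\lambda+1}$, and $s'$ is adjacent to all vertices of $Q_{\lambda+1}$ and to none of $Q_1,\dots,Q_\lambda$; (iii) the graph consisting of a complete graph $K_{n+1}$ with $n = \lambda^2-\lambda+1$, together with a clique $K_p$ on $p$ new vertices, each of which is adjacent to exactly the same $n$ fixed vertices of the $K_{n+1}$ (and not to the remaining vertex).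
   Context: The smallest eigenvalue of a graph refers to the smallest eigenvalue of its adjacency matrix. In the paper these graphs are $G(\mathfrak{h}^{(\lambda+1)},p)$, $G(\mathfrak{h}^{(\lambda,1)},p)$ and $G(\mathfrak{c}_{\lambda^2-\lambda+1},p)$, obtained from Hoffman graphs by replacing each fat vertex by a clique $K_p$ joined to all slim neighbours of that fat vertex. *)

theory Defs
  imports "Jordan_Normal_Form.Char_Poly"
begin

definition adj_matrix :: "nat \<Rightarrow> (nat \<Rightarrow> nat \<Rightarrow> bool) \<Rightarrow> real mat" where
  "adj_matrix N E = mat N N (\<lambda>(i,j). if E i j then 1 else 0)"

definition smallest_eigenvalue :: "real mat \<Rightarrow> real" where
  "smallest_eigenvalue A = Min {\<mu>. eigenvalue A \<mu>}"

text \<open>(i): lam+1 disjoint cliques K_p on vertices 0..<(lam+1)p (vertex v lies in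
  clique v div p), plus vertex (lam+1)p adjacent to all of them.\<close>
definition adj1 :: "nat \<Rightarrow> nat \<Rightarrow> nat \<Rightarrow> nat \<Rightarrow> bool" where
  "adj1 lam p i j = (let M = (lam+1)*p in
     i \<noteq> j \<and> ((i < M \<and> j < M \<and> i div p = j div p) \<or> (i = M \<and> j < M) \<or> (j = M \<and> i < M)))"

definition graph1 :: "nat \<Rightarrow> nat \<Rightarrow> real mat" where
  "graph1 lam p = adj_matrix ((lam+1)*p + 1) (adj1 lam p)"

text \<open>(ii): cliques Q_1..Q_(lam+1) on vertices 0..<(lam+1)p (Q_(k+1) = vertices with
  div p = k), s = (lam+1)p, s' = (lam+1)p+1; s ~ s', s ~ Q_1..Q_lam (vertices < lam p),
  s' ~ Q_(lam+1) (vertices lam p ..< (lam+1)p).\<close>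
definition adj2 :: "nat \<Rightarrow> nat \<Rightarrow> nat \<Rightarrow> nat \<Rightarrow> bool" where
  "adj2 lam p i j = (let M = (lam+1)*p; s = M; s' = M+1;
     E = (\<lambda>a b. (a < M \<and> b < M \<and> a div p = b div p)
               \<or> (a = s \<and> b = s')
               \<or> (a = s \<and> b < lam*p)
               \<or> (a = s' \<and> lam*p \<le> b \<and> b < M))
     in i \<noteq> j \<and> (E i j \<or> E j i))"

definition graph2 :: "nat \<Rightarrow> nat \<Rightarrow> real mat" where
  "graph2 lam p = adj_matrix ((lam+1)*p + 2) (adj2 lam p)"

text \<open>(iii): K_(n+1) on vertices 0..n, clique K_p on vertices n+1..n+p, each of which
  is adjacent to vertices 0..n-1 (not to vertex n); n = lam^2-lam+1.\<close>
definition adj3 :: "nat \<Rightarrow> nat \<Rightarrow> nat \<Rightarrow> nat \<Rightarrow> bool" where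
  "adj3 lam p i j = (let n = lam^2 - lam + 1 in
     i \<noteq> j \<and> ((i \<le> n \<and> j \<le> n) \<or> (n < i \<and> n < j) \<or> (i < n \<and> n < j) \<or> (j < n \<and> n < i)))"

definition graph3 :: "nat \<Rightarrow> nat \<Rightarrow> real mat" where
  "graph3 lam p = adj_matrix ((lam^2 - lam + 1) + 1 + p) (adj3 lam p)"

end

theory Submission
  imports Defs
begin

(* Each graph has an equitable partition into its cliques and its special vertices, so an
   eigenvalue of the quotient matrix of that partition is an eigenvalue of the graph, with
   an eigenvector constant on the classes. For p = lam^4 the characteristic polynomial of
   each quotient matrix changes sign between -p and -lam, hence has a root below -lam. *)

lemma smallest_eigenvalue_le:
  assumes A: "A \<in> carrier_mat n n" and "eigenvalue A \<mu>"
  shows "smallest_eigenvalue A \<le> \<mu>"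
proof -
  have "char_poly A \<noteq> 0" using degree_monic_char_poly[OF A] by auto
  hence "finite {x. poly (char_poly A) x = 0}" by (rule poly_roots_finite)
  moreover have "{x. eigenvalue A x} = {x. poly (char_poly A) x = 0}"
    using eigenvalue_root_char_poly[OF A] by auto
  ultimately have "finite {x. eigenvalue A x}" by simp
  thus ?thesis unfolding smallest_eigenvalue_def using assms(2) by (simp add: Min_le)
qed

lemma adj_matrix_mult_vec:
  assumes "i < N"
  shows "(adj_matrix N E *\<^sub>v vec N f) $ i = (\<Sum>j\<in>{j. j < N \<and> E i j}. f j)"
proof -
  have "(adj_matrix N E *\<^sub>v vec N f) $ i = (\<Sum>j<N. if E i j then f j else 0)"
    using assms unfolding adj_matrix_def
    by (auto simp: scalar_prod_def lessThan_atLeast0 intro!: sum.cong)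
  also have "\<dots> = (\<Sum>j\<in>{j. j < N \<and> E i j}. f j)"
    by (simp add: sum.inter_filter[symmetric] Collect_conj_eq lessThan_def Int_commute)
  finally show ?thesis .
qed

lemma smallest_eigenvalue_adj_matrix_le:
  fixes f :: "nat \<Rightarrow> real"
  assumes eigen: "\<And>i. i < N \<Longrightarrow> (\<Sum>j\<in>{j. j < N \<and> E i j}. f j) = \<mu> * f i"
    and "z < N" "f z \<noteq> 0"
  shows "smallest_eigenvalue (adj_matrix N E) \<le> \<mu>"
proof (rule smallest_eigenvalue_le)
  show A: "adj_matrix N E \<in> carrier_mat N N" unfolding adj_matrix_def by simp
  have "adj_matrix N E *\<^sub>v vec N f = \<mu> \<cdot>\<^sub>v vec N f"
  proof (rule eq_vecI)
    fix i assume "i < dim_vec (\<mu> \<cdot>\<^sub>v vec N f)"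
    hence "i < N" by simp
    thus "(adj_matrix N E *\<^sub>v vec N f) $ i = (\<mu> \<cdot>\<^sub>v vec N f) $ i"
      by (simp only: adj_matrix_mult_vec eigen) simp
  qed (use A in simp)
  moreover have "vec N f \<noteq> 0\<^sub>v N" using assms(2,3) by (auto simp: vec_eq_iff)
  ultimately show "eigenvalue (adj_matrix N E) \<mu>"
    unfolding eigenvalue_def eigenvector_def using A by (intro exI[of _ "vec N f"]) auto
qed

definition block :: "nat \<Rightarrow> nat \<Rightarrow> nat set" where
  "block p k = {k * p..<k * p + p}"

lemma finite_block [simp]: "finite (block p k)"
  unfolding block_def by simp

lemma mem_block_iff:
  assumes "0 < p"
  shows "j \<in> block p k \<longleftrightarrow> j div p = k"
  unfolding block_def using assms
  by (metis add.commute atLeastLessThan_iff div_nat_eqI div_times_less_eq_dividend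
      dividend_less_div_times mult.commute mult_Suc)

lemma block_subset_lessThan:
  assumes "0 < p" "i < m * p"
  shows "block p (i div p) \<subseteq> {..<m * p}"
proof -
  have "i div p < m" using assms by (simp add: div_less_iff_less_mult)
  hence "i div p * p + p \<le> m * p" by (metis Suc_leI add.commute mult_Suc mult_le_mono1)
  thus ?thesis unfolding block_def by auto
qed

lemma card_block_minus:
  assumes "0 < p" "i div p = k"
  shows "real (card (block p k - {i})) = real p - 1"
  using assms mem_block_iff[OF assms(1), of i k] by (simp add: block_def of_nat_diff)

lemma sum_constant_on:
  fixes f :: "'a \<Rightarrow> 'b::semiring_1"
  assumes "\<And>j. j \<in> A \<Longrightarrow> f j = c"
  shows "sum f A = of_nat (card A) * c"
  using assms by simp

lemma sum_union_constant_on: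
  fixes f :: "'a \<Rightarrow> 'b::semiring_1"
  assumes "finite A" "finite B" "A \<inter> B = {}"
    and "\<And>j. j \<in> A \<Longrightarrow> f j = a" "\<And>j. j \<in> B \<Longrightarrow> f j = b"
  shows "sum f (A \<union> B) = of_nat (card A) * a + of_nat (card B) * b"
  using assms by (simp add: sum.union_disjoint)

(* Characteristic polynomials of the quotient matrices, with L = lam and P = p; for the
   third graph the first argument is n, the number of common neighbours of the K_p. *)
definition quotient_poly1 :: "real \<Rightarrow> real \<Rightarrow> real \<Rightarrow> real" where
  "quotient_poly1 L P x = x * (x - (P - 1)) - (L + 1) * P"

definition quotient_poly2 :: "real \<Rightarrow> real \<Rightarrow> real \<Rightarrow> real" where
  "quotient_poly2 L P x = (x * (x - (P - 1)) - L * P) * (x * (x - (P - 1)) - P) - (x - (P - 1))^2"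

definition quotient_poly3 :: "real \<Rightarrow> real \<Rightarrow> real \<Rightarrow> real" where
  "quotient_poly3 n P x = x * (x - (P - 1)) * (x - n + 1) - n * (x - (P - 1)) - P * n * x"

lemma quotient_poly2_eigen_equation:
  assumes "\<mu> \<noteq> P - 1" "quotient_poly2 L P \<mu> = 0"
  defines "b \<equiv> \<mu> - (P - 1)" and "c \<equiv> \<mu> * (\<mu> - (P - 1)) - L * P"
  shows "P * (c / b) + b = \<mu> * c"
proof -
  have "b \<noteq> 0" "b^2 = c * (\<mu> * b - P)"
    using assms unfolding quotient_poly2_def b_def c_def by simp_all
  thus ?thesis by (simp add: field_simps power2_eq_square)
qed

lemma quotient_poly3_eigen_equation:
  assumes "\<mu> \<noteq> 0" "\<mu> \<noteq> P - 1" "quotient_poly3 n P \<mu> = 0"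
  shows "(n - 1) + n / \<mu> + P * (n / (\<mu> - (P - 1))) = \<mu>"
proof -
  define r where "r = P - 1"
  have "\<mu> - r \<noteq> 0" using assms(2) by (simp add: r_def)
  hence "\<mu> * (\<mu> - r) * ((n - 1) + n / \<mu> + P * (n / (\<mu> - r)))
      = (n - 1) * \<mu> * (\<mu> - r) + n * (\<mu> - r) + P * n * \<mu>"
    using assms(1) by (simp add: field_simps)
  also have "\<dots> = \<mu> * (\<mu> - r) * \<mu>"
    using assms(3) unfolding quotient_poly3_def r_def by (simp add: algebra_simps)
  finally show ?thesis using assms(1) \<open>\<mu> - r \<noteq> 0\<close> by (simp add: r_def)
qed

lemma adj1_neighbours_clique:
  assumes "M = (L + 1) * p" "0 < p" "i < M"
  shows "{j. j < M + 1 \<and> adj1 L p i j} = (block p (i div p) - {i}) \<union> {M}"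
  using assms block_subset_lessThan[OF assms(2), of i "L + 1"] mem_block_iff[OF assms(2)]
  unfolding adj1_def Let_def by auto

lemma adj1_neighbours_apex:
  assumes "M = (L + 1) * p"
  shows "{j. j < M + 1 \<and> adj1 L p M j} = {..<M}"
  using assms unfolding adj1_def Let_def by auto

lemma smallest_eigenvalue_graph1_le:
  assumes p: "0 < p" and root: "quotient_poly1 (real L) (real p) \<mu> = 0"
  shows "smallest_eigenvalue (graph1 L p) \<le> \<mu>"
proof -
  define M where "M = (L + 1) * p"
  define f where "f j = (if j < M then 1 else \<mu> - (real p - 1))" for j
  have "smallest_eigenvalue (adj_matrix (M + 1) (adj1 L p)) \<le> \<mu>"
  proof (rule smallest_eigenvalue_adj_matrix_le[where f = f and z = 0])
    fix i assume "i < M + 1"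
    then consider "i < M" | "i = M" by linarith
    then show "(\<Sum>j\<in>{j. j < M + 1 \<and> adj1 L p i j}. f j) = \<mu> * f i"
    proof cases
      case 1
      have "block p (i div p) \<subseteq> {..<M}"
        using block_subset_lessThan[OF p] 1 unfolding M_def by blast
      hence "(\<Sum>j\<in>{j. j < M + 1 \<and> adj1 L p i j}. f j) = (real p - 1) * 1 + 1 * (\<mu> - (real p - 1))"
        unfolding adj1_neighbours_clique[OF M_def p 1] using p
        by (subst sum_union_constant_on[where a = 1 and b = "\<mu> - (real p - 1)"])
          (auto simp: f_def card_block_minus)
      thus ?thesis using 1 by (simp add: f_def)
    next
      case 2
      have "(\<Sum>j\<in>{j. j < M + 1 \<and> adj1 L p i j}. f j) = (real L + 1) * real p"
        unfolding 2 adj1_neighbours_apex[OF M_def] by (simp add: f_def M_def algebra_simps)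
      thus ?thesis using 2 root by (simp add: f_def quotient_poly1_def)
    qed
  qed (simp_all add: f_def M_def p)
  thus ?thesis unfolding graph1_def M_def .
qed

lemma adj2_neighbours_front:
  assumes "M = (L + 1) * p" "0 < p" "i < L * p"
  shows "{j. j < M + 2 \<and> adj2 L p i j} = (block p (i div p) - {i}) \<union> {M}"
  using assms block_subset_lessThan[OF assms(2,3)] mem_block_iff[OF assms(2)]
  unfolding adj2_def Let_def by auto

lemma adj2_neighbours_last:
  assumes "M = (L + 1) * p" "0 < p" "L * p \<le> i" "i < M"
  shows "{j. j < M + 2 \<and> adj2 L p i j} = (block p L - {i}) \<union> {M + 1}"
proof -
  have "i div p = L" using assms mem_block_iff[OF assms(2), of i L] by (simp add: block_def)
  moreover have "block p L \<subseteq> {L * p..<M}" using assms(1) by (auto simp: block_def)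
  ultimately show ?thesis using assms mem_block_iff[OF assms(2)] unfolding adj2_def Let_def
    by auto
qed

lemma adj2_neighbours_s:
  assumes "M = (L + 1) * p"
  shows "{j. j < M + 2 \<and> adj2 L p M j} = {..<L * p} \<union> {M + 1}"
  using assms unfolding adj2_def Let_def by auto

lemma adj2_neighbours_s':
  assumes "M = (L + 1) * p"
  shows "{j. j < M + 2 \<and> adj2 L p (M + 1) j} = block p L \<union> {M}"
  using assms unfolding adj2_def Let_def block_def by auto

lemma smallest_eigenvalue_graph2_le:
  assumes p: "0 < p" and b0: "\<mu> \<noteq> real p - 1"
    and root: "quotient_poly2 (real L) (real p) \<mu> = 0"
  shows "smallest_eigenvalue (graph2 L p) \<le> \<mu>"
proof -
  define M where "M = (L + 1) * p"
  define b where "b = \<mu> - (real p - 1)"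
  define c where "c = \<mu> * b - real L * real p"
  define f where "f j = (if j < L * p then 1 else if j < M then c / b else if j = M then b else c)"
    for j
  have last_block: "block p L \<subseteq> {L * p..<M}" by (auto simp: block_def M_def)
  have front_le: "L * p \<le> M" by (simp add: M_def)
  have "b \<noteq> 0" using b0 by (simp add: b_def)
  have "smallest_eigenvalue (adj_matrix (M + 2) (adj2 L p)) \<le> \<mu>"
  proof (rule smallest_eigenvalue_adj_matrix_le[where f = f and z = M])
    fix i assume "i < M + 2"
    then consider "i < L * p" | "L * p \<le> i" "i < M" | "i = M" | "i = M + 1" by linarith
    then show "(\<Sum>j\<in>{j. j < M + 2 \<and> adj2 L p i j}. f j) = \<mu> * f i"
    proof cases
      case 1
      have "block p (i div p) \<subseteq> {..<L * p}" using block_subset_lessThan[OF p 1] .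
      hence "(\<Sum>j\<in>{j. j < M + 2 \<and> adj2 L p i j}. f j) = (real p - 1) * 1 + 1 * b"
        unfolding adj2_neighbours_front[OF M_def p 1] using p front_le
        by (subst sum_union_constant_on[where a = 1 and b = b]) (auto simp: f_def card_block_minus)
      thus ?thesis using 1 by (simp add: f_def b_def)
    next
      case 2
      have "i div p = L" using 2 mem_block_iff[OF p, of i L] by (simp add: block_def M_def)
      hence "(\<Sum>j\<in>{j. j < M + 2 \<and> adj2 L p i j}. f j) = (real p - 1) * (c / b) + 1 * c"
        unfolding adj2_neighbours_last[OF M_def p 2] using p last_block front_le
        by (subst sum_union_constant_on[where a = "c / b" and b = c]) (auto simp: f_def card_block_minus)
      thus ?thesis using 2 \<open>b \<noteq> 0\<close> by (simp add: f_def b_def field_simps)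
    next
      case 3
      have "(\<Sum>j\<in>{j. j < M + 2 \<and> adj2 L p i j}. f j) = real (L * p) * 1 + 1 * c"
        unfolding 3 adj2_neighbours_s[OF M_def] using front_le
        by (subst sum_union_constant_on[where a = 1 and b = c]) (auto simp: f_def)
      thus ?thesis using 3 front_le by (simp add: f_def c_def)
    next
      case 4
      have "(\<Sum>j\<in>{j. j < M + 2 \<and> adj2 L p i j}. f j) = real p * (c / b) + 1 * b"
        unfolding 4 adj2_neighbours_s'[OF M_def] using last_block front_le
        by (subst sum_union_constant_on[where a = "c / b" and b = b]) (auto simp: f_def block_def)
      also have "\<dots> = \<mu> * c"
        using quotient_poly2_eigen_equation[OF b0 root] by (simp add: b_def c_def)
      finally show ?thesis using 4 front_le by (simp add: f_def)
    qed
  qed (use \<open>b \<noteq> 0\<close> in \<open>simp_all add: f_def M_def\<close>)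
  thus ?thesis unfolding graph2_def M_def .
qed

lemma adj3_neighbours_complete:
  assumes "n = L^2 - L + 1" "i < n"
  shows "{j. j < n + 1 + p \<and> adj3 L p i j} = ({..n} - {i}) \<union> {n<..<n + 1 + p}"
  using assms unfolding adj3_def Let_def by auto

lemma adj3_neighbours_apex:
  assumes "n = L^2 - L + 1"
  shows "{j. j < n + 1 + p \<and> adj3 L p n j} = {..<n}"
  using assms unfolding adj3_def Let_def by auto

lemma adj3_neighbours_clique:
  assumes "n = L^2 - L + 1" "n < i" "i < n + 1 + p"
  shows "{j. j < n + 1 + p \<and> adj3 L p i j} = ({n<..<n + 1 + p} - {i}) \<union> {..<n}"
  using assms unfolding adj3_def Let_def by auto

lemma smallest_eigenvalue_graph3_le:
  assumes "\<mu> \<noteq> 0" "\<mu> \<noteq> real p - 1"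
    and root: "quotient_poly3 (real L^2 - real L + 1) (real p) \<mu> = 0"
  shows "smallest_eigenvalue (graph3 L p) \<le> \<mu>"
proof -
  define n where "n = L^2 - L + 1"
  define N where "N = n + 1 + p"
  define b where "b = real n / \<mu>"
  define c where "c = real n / (\<mu> - (real p - 1))"
  define f where "f j = (if j < n then 1 else if j = n then b else c)" for j
  have "real n = real L^2 - real L + 1"
    using power_increasing[of 1 2 L] by (cases "L = 0") (auto simp: n_def of_nat_diff)
  hence root_n: "quotient_poly3 (real n) (real p) \<mu> = 0" using root by simp
  have "smallest_eigenvalue (adj_matrix N (adj3 L p)) \<le> \<mu>"
  proof (rule smallest_eigenvalue_adj_matrix_le[where f = f and z = 0])
    fix i assume "i < N"
    then consider "i < n" | "i = n" | "n < i" "i < N" by linarith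
    then show "(\<Sum>j\<in>{j. j < N \<and> adj3 L p i j}. f j) = \<mu> * f i"
    proof cases
      case 1
      have "{..n} - {i} = insert n ({..<n} - {i})" using 1 by auto
      hence "(\<Sum>j\<in>{..n} - {i}. f j) = (real n - 1) + b"
        using 1 by (simp add: f_def of_nat_diff)
      moreover have "(\<Sum>j\<in>{n<..<N}. f j) = real p * c"
        by (subst sum_constant_on[of _ _ c]) (auto simp: f_def N_def)
      moreover have "(real n - 1) + b + real p * c = \<mu>"
        using quotient_poly3_eigen_equation[OF assms(1,2) root_n] by (simp add: b_def c_def)
      ultimately have "(\<Sum>j\<in>{j. j < N \<and> adj3 L p i j}. f j) = \<mu>"
        unfolding N_def adj3_neighbours_complete[OF n_def 1] by (subst sum.union_disjoint) auto
      thus ?thesis using 1 by (simp add: f_def)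
    next
      case 2
      have "(\<Sum>j\<in>{j. j < N \<and> adj3 L p i j}. f j) = real n"
        unfolding 2 N_def adj3_neighbours_apex[OF n_def] by (simp add: f_def)
      thus ?thesis using 2 \<open>\<mu> \<noteq> 0\<close> by (simp add: f_def b_def)
    next
      case 3
      have "(\<Sum>j\<in>{j. j < N \<and> adj3 L p i j}. f j) = (real p - 1) * c + real n * 1"
        unfolding N_def adj3_neighbours_clique[OF n_def 3[unfolded N_def]] using 3
        by (subst sum_union_constant_on[where a = c and b = 1]) (auto simp: f_def N_def of_nat_diff)
      also have "\<dots> = \<mu> * c" using \<open>\<mu> \<noteq> real p - 1\<close> by (simp add: c_def field_simps)
      finally show ?thesis using 3 by (simp add: f_def)
    qed
  qed (simp_all add: f_def N_def n_def)
  thus ?thesis unfolding graph3_def N_def n_def .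
qed

lemma exists_root_below_of_sign_change:
  fixes f :: "real \<Rightarrow> real"
  assumes "a \<le> b" "continuous_on {a..b} f" "f a * f b < 0"
  shows "\<exists>x<b. f x = 0"
proof -
  have "f a < 0 \<and> 0 < f b \<or> f b < 0 \<and> 0 < f a"
    using assms(3) by (auto simp: mult_less_0_iff)
  then obtain x where "x \<le> b" "f x = 0"
    using IVT'[of f a 0 b] IVT2'[of f b 0 a] assms(1,2) by force
  moreover have "x \<noteq> b" using \<open>f x = 0\<close> assms(3) by auto
  ultimately show ?thesis by (auto intro: le_neq_trans)
qed

lemma quotient_poly1_pos_at_minus_P:
  assumes "0 \<le> L" "L + 3 \<le> P"
  shows "quotient_poly1 L P (- P) > 0"
proof -
  have "quotient_poly1 L P (- P) = P * (2 * P - 2 - L)"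
    unfolding quotient_poly1_def by (simp add: algebra_simps)
  thus ?thesis using assms by simp
qed

lemma quotient_poly1_neg_at_minus_L:
  assumes "L^2 < L + P"
  shows "quotient_poly1 L P (- L) < 0"
  using assms unfolding quotient_poly1_def by (simp add: algebra_simps power2_eq_square)

lemma quotient_poly2_pos_at_minus_P:
  assumes "0 \<le> L" "L + 2 \<le> P"
  shows "quotient_poly2 L P (- P) > 0"
proof -
  have "P * P \<le> P * (2 * P - 1 - L)" "P * P \<le> P * (2 * P - 2)"
    using assms by (auto intro: mult_left_mono)
  hence "(P * P) * (P * P) \<le> P * (2 * P - 1 - L) * (P * (2 * P - 2))"
    using assms by (intro mult_mono) auto
  moreover have "(2 * P - 1)^2 < (2 * P)^2"
    using assms by (intro power_strict_mono) auto
  moreover have "(2 * P)^2 \<le> (P * P) * (P * P)"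
  proof -
    have "4 \<le> P * P" using assms mult_mono[of 2 P 2 P] by simp
    hence "4 * (P * P) \<le> (P * P) * (P * P)" by (intro mult_right_mono) auto
    thus ?thesis by (simp add: power2_eq_square)
  qed
  moreover have "quotient_poly2 L P (- P) = P * (2 * P - 1 - L) * (P * (2 * P - 2)) - (2 * P - 1)^2"
    unfolding quotient_poly2_def by (simp add: algebra_simps power2_eq_square)
  ultimately show ?thesis by linarith
qed

lemma quotient_poly2_neg_at_minus_L:
  assumes "1 \<le> L" "2 * L^3 < L + P - 1"
  shows "quotient_poly2 L P (- L) < 0"
proof -
  define X where "X = L + P - 1"
  have "1 \<le> L^3" using assms(1) by (rule one_le_power)
  hence X: "2 * L^3 < X" "2 \<le> X" using assms(2) unfolding X_def by auto
  have "L * (L - 1)^2 \<le> L * L^2"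
    using assms(1) by (intro mult_left_mono power_mono) auto
  hence "L * (L - 1)^2 * (X + 1) \<le> L^3 * (X + 1)"
    using X by (intro mult_right_mono) (auto simp: power_numeral_reduce)
  also have "\<dots> \<le> L^3 * (2 * X)"
    using X assms(1) by (intro mult_left_mono) auto
  also have "\<dots> = (2 * L^3) * X" by simp
  also have "\<dots> < X * X"
    using X by (intro mult_strict_right_mono) auto
  also have "quotient_poly2 L P (- L) = L * (L - 1)^2 * (X + 1) - X * X"
    unfolding quotient_poly2_def X_def by (simp add: algebra_simps power2_eq_square)
  ultimately show ?thesis by linarith
qed

lemma quotient_poly3_neg_at_minus_P:
  assumes "3 \<le> P" "1 \<le> n"
  shows "quotient_poly3 n P (- P) < 0"
proof -
  have "P * (2 * P - 1) * n \<le> P * (2 * P - 1) * (P + n - 1)"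
    using assms by (intro mult_left_mono) auto
  moreover have "0 \<le> P * (P - 3)" using assms by simp
  hence "0 < n * (P * (P - 3) + 1)" using assms by (intro mult_pos_pos) linarith+
  moreover have "quotient_poly3 n P (- P) = n * (2 * P - 1) + P * P * n - P * (2 * P - 1) * (P + n - 1)"
    unfolding quotient_poly3_def by (simp add: algebra_simps)
  ultimately show ?thesis by (simp add: algebra_simps)
qed

lemma quotient_poly3_pos_at_minus_L:
  assumes "(L - 1)^2 * (L^2 + 1) < P"
  shows "quotient_poly3 (L^2 - L + 1) P (- L) > 0"
proof -
  have "quotient_poly3 (L^2 - L + 1) P (- L) = P - (L - 1)^2 * (L^2 + 1)"
    unfolding quotient_poly3_def by (simp add: algebra_simps power2_eq_square)
  thus ?thesis using assms by simp
qed

lemma double_power_le_power_Suc: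
  fixes L :: real
  assumes "2 \<le> L"
  shows "2 * L^n \<le> L^(n + 1)"
  using assms by (simp add: mult_right_mono)

lemma double_powers_le:
  fixes L :: real
  assumes "2 \<le> L"
  shows "2 * L \<le> L^2" "2 * L^2 \<le> L^3" "2 * L^3 \<le> L^4"
  using double_power_le_power_Suc[OF assms, of 1] double_power_le_power_Suc[OF assms, of 2]
    double_power_le_power_Suc[OF assms, of 3]
  by (simp_all add: power2_eq_square)

lemma quotient_poly1_has_root_below:
  fixes L :: real
  assumes "2 \<le> L"
  shows "\<exists>\<mu> < - L. quotient_poly1 L (L^4) \<mu> = 0"
proof (rule exists_root_below_of_sign_change)
  note pow = double_powers_le[OF assms]
  show "- (L^4) \<le> - L" using assms pow by linarith
  show "continuous_on {- (L^4)..- L} (quotient_poly1 L (L^4))"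
    unfolding quotient_poly1_def by (intro continuous_intros)
  have "quotient_poly1 L (L^4) (- (L^4)) > 0" using assms pow by (intro quotient_poly1_pos_at_minus_P) auto
  moreover have "quotient_poly1 L (L^4) (- L) < 0" using assms pow by (intro quotient_poly1_neg_at_minus_L) auto
  ultimately show "quotient_poly1 L (L^4) (- (L^4)) * quotient_poly1 L (L^4) (- L) < 0"
    by (rule mult_pos_neg)
qed

lemma quotient_poly2_has_root_below:
  fixes L :: real
  assumes "2 \<le> L"
  shows "\<exists>\<mu> < - L. quotient_poly2 L (L^4) \<mu> = 0"
proof (rule exists_root_below_of_sign_change)
  note pow = double_powers_le[OF assms]
  show "- (L^4) \<le> - L" using assms pow by linarith
  show "continuous_on {- (L^4)..- L} (quotient_poly2 L (L^4))"
    unfolding quotient_poly2_def by (intro continuous_intros)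
  have "quotient_poly2 L (L^4) (- (L^4)) > 0" using assms pow by (intro quotient_poly2_pos_at_minus_P) auto
  moreover have "quotient_poly2 L (L^4) (- L) < 0" using assms pow by (intro quotient_poly2_neg_at_minus_L) auto
  ultimately show "quotient_poly2 L (L^4) (- (L^4)) * quotient_poly2 L (L^4) (- L) < 0"
    by (rule mult_pos_neg)
qed

lemma quotient_poly3_has_root_below:
  fixes L :: real
  assumes "2 \<le> L"
  shows "\<exists>\<mu> < - L. quotient_poly3 (L^2 - L + 1) (L^4) \<mu> = 0"
proof (rule exists_root_below_of_sign_change)
  note pow = double_powers_le[OF assms]
  show "- (L^4) \<le> - L" using assms pow by linarith
  show "continuous_on {- (L^4)..- L} (quotient_poly3 (L^2 - L + 1) (L^4))"
    unfolding quotient_poly3_def by (intro continuous_intros)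
  have "(L - 1)^2 * (L^2 + 1) = L^4 - (2 * L^3 - 2 * L^2 + 2 * L - 1)"
    by (simp add: algebra_simps power2_eq_square power3_eq_cube power4_eq_xxxx)
  hence "quotient_poly3 (L^2 - L + 1) (L^4) (- L) > 0"
    using assms pow by (intro quotient_poly3_pos_at_minus_L) auto
  moreover have "quotient_poly3 (L^2 - L + 1) (L^4) (- (L^4)) < 0"
    using assms pow by (intro quotient_poly3_neg_at_minus_P) auto
  ultimately show "quotient_poly3 (L^2 - L + 1) (L^4) (- (L^4)) * quotient_poly3 (L^2 - L + 1) (L^4) (- L) < 0"
    by (simp add: mult_neg_pos)
qed

theorem mainTheorem5:
  fixes lam :: nat
  assumes "lam \<ge> 2"
  shows "\<exists>p::nat. p > 0 \<and>
           smallest_eigenvalue (graph1 lam p) < - real lam \<and>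
           smallest_eigenvalue (graph2 lam p) < - real lam \<and>
           smallest_eigenvalue (graph3 lam p) < - real lam"
proof (intro exI conjI)
  define L where "L = real lam"
  have L: "2 \<le> L" using assms by (simp add: L_def)
  have P: "0 \<le> real (lam^4)" by simp
  obtain \<mu>1 where "\<mu>1 < - L" "quotient_poly1 L (L^4) \<mu>1 = 0"
    using quotient_poly1_has_root_below[OF L] by blast
  thus "smallest_eigenvalue (graph1 lam (lam^4)) < - real lam"
    using assms smallest_eigenvalue_graph1_le[of "lam^4" lam \<mu>1] by (simp add: L_def)
  obtain \<mu>2 where "\<mu>2 < - L" "quotient_poly2 L (L^4) \<mu>2 = 0"
    using quotient_poly2_has_root_below[OF L] by blast
  moreover have "\<mu>2 \<noteq> real (lam^4) - 1" using \<open>\<mu>2 < - L\<close> L P by linarith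
  ultimately show "smallest_eigenvalue (graph2 lam (lam^4)) < - real lam"
    using assms smallest_eigenvalue_graph2_le[of "lam^4" \<mu>2 lam] by (simp add: L_def)
  obtain \<mu>3 where "\<mu>3 < - L" "quotient_poly3 (L^2 - L + 1) (L^4) \<mu>3 = 0"
    using quotient_poly3_has_root_below[OF L] by blast
  moreover have "\<mu>3 \<noteq> 0" "\<mu>3 \<noteq> real (lam^4) - 1" using \<open>\<mu>3 < - L\<close> L P by linarith+
  ultimately show "smallest_eigenvalue (graph3 lam (lam^4)) < - real lam"
    using smallest_eigenvalue_graph3_le[of \<mu>3 "lam^4" lam] by (simp add: L_def)
  show "0 < lam^4" using assms by simp
qed

end
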